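(* Let $p$ be a complex polynomial of degree at least two. Then every zero of $p'$ belongs to $H_p = \operatorname{conv} J_p$.
   Context: For a polynomial $p$ viewed as a holomorphic self-map of the Riemann sphere $\widehat{\mathbb{C}}$ (with $p(\infty)=\infty$), the Fatou set $F_p$ is the maximal open subset of $\widehat{\mathbb{C}}$ on which the iterates $\{p^{\circ n}\}_{n\in\mathbb{N}}$ form an equicontinuous family, and the Julia set $J_p$ is the complement $\widehat{\mathbb{C}}\setminus F_p$; for polynomials $J_p$ is a nonempty compact subset of $\mathbb{C}$. $\operatorname{conv} X$ denotes the convex hull of $X \subset \mathbb{C}\cong\mathbb{R}^2$. *)

theory Defs
  imports "HOL-Analysis.Analysis" "HOL-Computational_Algebra.Polynomial"
begin

text \<open>Chordal (spherical) metric on the Riemann sphere, restricted to finite points.\<close>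
definition chordal_dist :: "complex \<Rightarrow> complex \<Rightarrow> real" where
  "chordal_dist z w =
     2 * cmod (z - w) / (sqrt (1 + (cmod z)\<^sup>2) * sqrt (1 + (cmod w)\<^sup>2))"

definition iterates_equicontinuous_at :: "complex poly \<Rightarrow> complex \<Rightarrow> bool" where
  "iterates_equicontinuous_at p w \<longleftrightarrow>
     (\<forall>e>0. \<exists>d>0. \<forall>z. cmod (z - w) < d \<longrightarrow>
        (\<forall>n. chordal_dist ((poly p ^^ n) z) ((poly p ^^ n) w) < e))"

text \<open>Finite part of the Fatou set: points having an open neighbourhood on which
  the iterates are equicontinuous (the union of all such open sets is the maximal one).\<close>
definition fatou_set :: "complex poly \<Rightarrow> complex set" where
  "fatou_set p = {z. \<exists>U. open U \<and> z \<in> U \<and> (\<forall>w\<in>U. iterates_equicontinuous_at p w)}"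

text \<open>Julia set (for polynomials it lies in the finite plane).\<close>
definition julia_set :: "complex poly \<Rightarrow> complex set" where
  "julia_set p = UNIV - fatou_set p"

end

theory Submission
  imports Defs "HOL-Computational_Algebra.Fundamental_Theorem_Algebra"
begin

text \<open>Choose a fixed point \<open>x\<close> of \<open>p\<close>. Since \<open>p'\<close> is also the derivative of \<open>p - x\<close>, the
  Gauss--Lucas theorem puts every critical point into the convex hull of the preimages of \<open>x\<close>,
  and these have bounded orbits. A point \<open>r\<close> with bounded orbit lies in \<open>conv J\<close>: otherwise a
  line separates \<open>r\<close> from \<open>conv J\<close>, and on the ray from \<open>r\<close> pointing away from \<open>conv J\<close> the
  last point with bounded orbit is a limit of escaping points. The iterates cannot be
  equicontinuous there, so this point is in \<open>J\<close>, contradicting the separation.\<close>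

lemma degree_diff_eq_left:
  fixes p q :: "'a::ab_group_add poly"
  assumes "degree q < degree p"
  shows "degree (p - q) = degree p"
  using degree_add_eq_left[of "- q" p] assms by simp

lemma pderiv_linear_factor: "pderiv [:-c, 1:] = 1"
  by (simp add: pderiv_pCons)

lemma poly_pderiv_prod_linear_factors:
  fixes a :: "nat \<Rightarrow> 'a::field"
  assumes "\<And>i. i < n \<Longrightarrow> z \<noteq> a i"
  shows "poly (pderiv (\<Prod>i<n. [:-a i, 1:])) z =
         poly (\<Prod>i<n. [:-a i, 1:]) z * (\<Sum>i<n. 1 / (z - a i))"
  using assms
proof (induction n)
  case 0
  then show ?case by simp
next
  case (Suc n)
  let ?P = "\<Prod>i<n. [:-a i, 1:]"
  have IH: "poly (pderiv ?P) z = poly ?P z * (\<Sum>i<n. 1 / (z - a i))"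
    using Suc by auto
  have "z - a n \<noteq> 0" using Suc.prems by auto
  moreover have deriv: "pderiv (?P * [:-a n, 1:]) = ?P + [:-a n, 1:] * pderiv ?P"
    by (simp only: pderiv_mult pderiv_linear_factor mult_1_right)
  ultimately show ?case
    unfolding prod.lessThan_Suc deriv by (simp add: IH sum.lessThan_Suc field_simps)
qed

text \<open>Conjugating the equation gives \<open>\<Sum> (z - a\<^sub>i) / |z - a\<^sub>i|\<^sup>2 = 0\<close>, which exhibits \<open>z\<close>
  as a mean of the \<open>a\<^sub>i\<close> with the positive weights \<open>1 / |z - a\<^sub>i|\<^sup>2\<close>.\<close>
lemma in_convex_hull_if_sum_reciprocals_eq_0:
  fixes a :: "nat \<Rightarrow> complex"
  assumes "n > 0" and "\<And>i. i < n \<Longrightarrow> z \<noteq> a i"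
    and "(\<Sum>i<n. 1 / (z - a i)) = 0"
  shows "z \<in> convex hull (a ` {..<n})"
proof -
  define w where "w i = 1 / (cmod (z - a i))\<^sup>2" for i
  have w_pos: "w i > 0" if "i < n" for i
    using assms(2)[OF that] by (simp add: w_def)
  have "cnj (1 / (z - a i)) = of_real (w i) * (z - a i)" if "i < n" for i
    using assms(2)[OF that] by (subst complex_div_cnj) (simp add: w_def field_simps)
  then have "(\<Sum>i<n. of_real (w i) * (z - a i)) = cnj (\<Sum>i<n. 1 / (z - a i))"
    unfolding cnj_sum by (intro sum.cong) auto
  also have "\<dots> = 0" using assms(3) by simp
  finally have "(\<Sum>i<n. of_real (w i) * z) = (\<Sum>i<n. of_real (w i) * a i)"
    by (simp add: algebra_simps sum_subtractf)
  define W where "W = (\<Sum>i<n. w i)"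
  have W_pos: "W > 0"
    unfolding W_def using w_pos assms(1) by (intro sum_pos) auto
  have "of_real W * z = (\<Sum>i<n. of_real (w i) * a i)"
    using \<open>(\<Sum>i<n. of_real (w i) * z) = _\<close> by (simp add: W_def sum_distrib_right)
  then have z_eq: "z = (\<Sum>i<n. (w i / W) *\<^sub>R a i)"
    using W_pos
    by (simp add: scaleR_conv_of_real sum_divide_distrib[symmetric] field_simps sum_distrib_left)
  show ?thesis
    unfolding z_eq
  proof (rule convex_sum)
    show "(\<Sum>i<n. w i / W) = 1"
      using W_pos by (simp add: W_def sum_divide_distrib[symmetric])
  qed (use w_pos W_pos in \<open>auto intro: hull_inc less_imp_le\<close>)
qed

theorem gauss_lucas:
  fixes q :: "complex poly"
  assumes "degree q \<ge> 1" and "poly (pderiv q) z = 0"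
  shows "z \<in> convex hull {x. poly q x = 0}"
proof -
  obtain a where q_eq: "smult (lead_coeff q) (\<Prod>i<degree q. [:-a i, 1:]) = q"
    using complex_poly_decompose' by blast
  let ?n = "degree q" and ?P = "\<Prod>i<degree q. [:-a i, 1:]"
  have roots: "a ` {..<?n} \<subseteq> {x. poly q x = 0}"
    by (subst (2) q_eq[symmetric]) (auto simp: poly_prod)
  show ?thesis
  proof (cases "\<exists>i<?n. z = a i")
    case True
    then show ?thesis using roots by (auto intro: hull_inc)
  next
    case False
    then have "poly ?P z \<noteq> 0" by (auto simp: poly_prod prod_zero_iff)
    moreover have "lead_coeff q \<noteq> 0" using assms(1) by auto
    moreover have "poly (pderiv q) z = lead_coeff q * poly ?P z * (\<Sum>i<?n. 1 / (z - a i))"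
      using False poly_pderiv_prod_linear_factors[of ?n z a]
      by (subst q_eq[symmetric]) (simp add: pderiv_smult)
    ultimately have "(\<Sum>i<?n. 1 / (z - a i)) = 0" using assms(2) by simp
    then have "z \<in> convex hull (a ` {..<?n})"
      using False assms(1) by (intro in_convex_hull_if_sum_reciprocals_eq_0) auto
    then show ?thesis using roots hull_mono by blast
  qed
qed

definition escape_radius :: "complex poly \<Rightarrow> real \<Rightarrow> bool" where
  "escape_radius p R \<longleftrightarrow> R \<ge> 1 \<and> (\<forall>z. R \<le> cmod z \<longrightarrow> 2 * cmod z \<le> cmod (poly p z))"

lemma escape_radius_exists:
  fixes p :: "complex poly"
  assumes "degree p \<ge> 2"
  obtains R where "escape_radius p R"
proof -
  obtain c c' q where p: "p = pCons c (pCons c' q)"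
    by (metis pCons_cases)
  have "q \<noteq> 0" using assms by (auto simp: p split: if_splits)
  then obtain r where r: "\<And>z. r \<le> cmod z \<Longrightarrow> 2 + cmod c \<le> cmod (poly (pCons c' q) z)"
    using poly_infinity by blast
  have "2 * cmod z \<le> cmod (poly p z)" if "max r 1 \<le> cmod z" for z
  proof -
    have "cmod z * (2 + cmod c) \<le> cmod (z * poly (pCons c' q) z)"
      using r that by (simp add: norm_mult mult_left_mono)
    also have "\<dots> \<le> cmod (poly p z) + cmod c"
      using norm_triangle_ineq4[of "poly p z" c] by (simp add: p)
    finally show ?thesis
      using that mult_right_mono[of 1 "cmod z" "cmod c"] by (simp add: algebra_simps)
  qed
  then show ?thesis by (intro that[of "max r 1"]) (simp add: escape_radius_def)
qed

lemma escape_radius_fixed_point: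
  assumes "escape_radius p R" and "poly p x = x"
  shows "cmod x < R"
proof (rule ccontr)
  assume "\<not> cmod x < R"
  then have "2 * cmod x \<le> cmod (poly p x)"
    using assms(1) unfolding escape_radius_def by simp
  then have "2 * cmod x \<le> cmod x" using assms(2) by simp
  then show False using \<open>\<not> cmod x < R\<close> assms(1) by (simp add: escape_radius_def)
qed

lemma escape_radius_preimage:
  assumes "escape_radius p R" and "cmod (poly p y) < R"
  shows "cmod y < R"
  using assms unfolding escape_radius_def by (smt (verit))

lemma chordal_dist_lower_bound:
  assumes "R \<ge> 1" and "cmod w \<le> R" and "2 * R \<le> cmod z"
  shows "1 / (2 * sqrt (1 + R\<^sup>2)) \<le> chordal_dist z w"
proof -
  define M where "M = cmod z"
  have M: "M \<ge> 1" using assms by (simp add: M_def)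
  have "1 \<le> M\<^sup>2" using M by (simp add: one_le_power)
  then have "1 + M\<^sup>2 \<le> (2 * M)\<^sup>2" by (simp add: power_mult_distrib)
  then have "sqrt (1 + M\<^sup>2) \<le> 2 * M"
    using M by (intro real_le_lsqrt) auto
  moreover have "sqrt (1 + (cmod w)\<^sup>2) \<le> sqrt (1 + R\<^sup>2)"
    using assms by (simp add: power_mono)
  ultimately have D_le: "sqrt (1 + M\<^sup>2) * sqrt (1 + (cmod w)\<^sup>2) \<le> 2 * M * sqrt (1 + R\<^sup>2)"
    using M by (intro mult_mono) auto
  have D_pos: "sqrt (1 + M\<^sup>2) * sqrt (1 + (cmod w)\<^sup>2) > 0"
    by (intro mult_pos_pos) (auto intro: add_pos_nonneg)
  have "1 / (2 * sqrt (1 + R\<^sup>2)) = M / (2 * M * sqrt (1 + R\<^sup>2))" using M by simp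
  also have "\<dots> \<le> M / (sqrt (1 + M\<^sup>2) * sqrt (1 + (cmod w)\<^sup>2))"
    using D_le D_pos M by (intro divide_left_mono) auto
  also have "\<dots> \<le> 2 * cmod (z - w) / (sqrt (1 + M\<^sup>2) * sqrt (1 + (cmod w)\<^sup>2))"
    using norm_triangle_ineq2[of z w] assms D_pos by (intro divide_right_mono) (auto simp: M_def)
  also have "\<dots> = chordal_dist z w" by (simp add: chordal_dist_def M_def)
  finally show ?thesis .
qed

text \<open>Points near \<open>w\<close> that leave the disc of radius \<open>R\<close> are pushed beyond \<open>2R\<close> one step later,
  while the orbit of \<open>w\<close> stays in the disc; this keeps their chordal distance bounded below.\<close>
lemma in_julia_setI:
  assumes R: "escape_radius p R"
    and bounded: "\<And>n. cmod ((poly p ^^ n) w) \<le> R"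
    and escaping: "\<And>d. d > 0 \<Longrightarrow> \<exists>z n. cmod (z - w) < d \<and> R < cmod ((poly p ^^ n) z)"
  shows "w \<in> julia_set p"
  unfolding julia_set_def
proof (intro DiffI UNIV_I notI)
  assume "w \<in> fatou_set p"
  then have "iterates_equicontinuous_at p w" unfolding fatou_set_def by blast
  moreover have "1 / (2 * sqrt (1 + R\<^sup>2)) > 0" by (auto intro: add_pos_nonneg)
  ultimately obtain d where "d > 0" and d: "\<And>z n. cmod (z - w) < d \<Longrightarrow>
      chordal_dist ((poly p ^^ n) z) ((poly p ^^ n) w) < 1 / (2 * sqrt (1 + R\<^sup>2))"
    unfolding iterates_equicontinuous_at_def by blast
  obtain z n where "cmod (z - w) < d" and z_out: "R < cmod ((poly p ^^ n) z)"
    using escaping[OF \<open>d > 0\<close>] by blast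
  have "2 * R \<le> 2 * cmod ((poly p ^^ n) z)" using z_out by simp
  also have "\<dots> \<le> cmod ((poly p ^^ Suc n) z)"
    using R z_out unfolding escape_radius_def by simp
  finally have "1 / (2 * sqrt (1 + R\<^sup>2)) \<le> chordal_dist ((poly p ^^ Suc n) z) ((poly p ^^ Suc n) w)"
    using R bounded[of "Suc n"] by (intro chordal_dist_lower_bound) (auto simp: escape_radius_def)
  with d[of z "Suc n"] \<open>cmod (z - w) < d\<close> show False by simp
qed

lemma continuous_on_iterate_poly:
  fixes p :: "'a::real_normed_field poly"
  assumes "continuous_on S f"
  shows "continuous_on S (\<lambda>t. (poly p ^^ n) (f t))"
proof (induction n)
  case (Suc n)
  show ?case using continuous_on_poly[OF Suc.IH] by simp
qed (simp add: assms)

text \<open>The point of the ray is the one with the largest parameter among those with bounded orbit;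
  these parameters form a closed set, bounded because bounded orbits stay in the disc.\<close>
lemma julia_set_meets_ray:
  assumes R: "escape_radius p R"
    and bounded: "\<And>n. cmod ((poly p ^^ n) r) \<le> R"
    and "a \<noteq> 0"
  obtains T where "T \<ge> 0" and "r - T *\<^sub>R a \<in> julia_set p"
proof -
  define g where "g t = r - t *\<^sub>R a" for t :: real
  define B where "B = {t. 0 \<le> t \<and> (\<forall>n. cmod ((poly p ^^ n) (g t)) \<le> R)}"
  have cont: "continuous_on UNIV (\<lambda>t. (poly p ^^ n) (g t))" for n
    unfolding g_def by (intro continuous_on_iterate_poly continuous_intros)
  have "B = {0..} \<inter> (\<Inter>n. (\<lambda>t. (poly p ^^ n) (g t)) -` cball 0 R)"
    unfolding B_def by (auto simp: dist_norm)
  also have "closed \<dots>"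
    by (intro closed_Int closed_INT ballI closed_vimage closed_cball closed_atLeast cont)
  finally have "closed B" .
  moreover have "0 \<in> B" using bounded by (simp add: B_def g_def)
  moreover have "bdd_above B"
  proof
    fix t assume "t \<in> B"
    then have "t \<ge> 0" and "cmod (r - t *\<^sub>R a) \<le> R"
      unfolding B_def g_def by (auto dest: spec[of _ 0])
    then have "t * cmod a \<le> R + cmod r"
      using norm_triangle_ineq3[of "t *\<^sub>R a" r] by (simp add: norm_minus_commute)
    then show "t \<le> (R + cmod r) / cmod a" using \<open>a \<noteq> 0\<close> by (simp add: field_simps)
  qed
  ultimately have "Sup B \<in> B" by (intro closed_contains_Sup) auto
  define T where "T = Sup B"
  have "T \<ge> 0" and bounded_T: "\<And>n. cmod ((poly p ^^ n) (g T)) \<le> R"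
    using \<open>Sup B \<in> B\<close> by (auto simp: B_def T_def)
  have escaping: "\<exists>n. R < cmod ((poly p ^^ n) (g t))" if "t > T" for t
  proof -
    have "t \<notin> B" using that \<open>bdd_above B\<close> cSup_upper[of t B] by (auto simp: T_def)
    then show ?thesis using that \<open>T \<ge> 0\<close> by (auto simp: B_def not_le)
  qed
  have "g T \<in> julia_set p"
  proof (rule in_julia_setI[OF R bounded_T])
    fix d :: real assume "d > 0"
    define t where "t = T + d / (2 * cmod a)"
    have "t > T" using \<open>d > 0\<close> \<open>a \<noteq> 0\<close> by (simp add: t_def)
    have "g t - g T = - ((d / (2 * cmod a)) *\<^sub>R a)" by (simp add: g_def t_def algebra_simps)
    then have "cmod (g t - g T) < d" using \<open>a \<noteq> 0\<close> \<open>d > 0\<close> by simp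
    then show "\<exists>z n. cmod (z - g T) < d \<and> R < cmod ((poly p ^^ n) z)"
      using escaping[OF \<open>t > T\<close>] by blast
  qed
  then show ?thesis using \<open>T \<ge> 0\<close> that by (simp add: g_def)
qed

lemma bounded_orbit_in_convex_hull_julia_set:
  assumes R: "escape_radius p R"
    and bounded: "\<And>n. cmod ((poly p ^^ n) r) \<le> R"
  shows "r \<in> convex hull (julia_set p)"
proof (rule ccontr)
  define C where "C = convex hull (julia_set p)"
  assume "r \<notin> convex hull (julia_set p)"
  then have "0 \<notin> (\<lambda>x. x - r) ` C" by (auto simp: C_def)
  moreover have "convex ((\<lambda>x. x - r) ` C)" by (simp add: C_def)
  ultimately obtain a where "a \<noteq> 0" and "\<forall>y\<in>(\<lambda>x. x - r) ` C. 0 \<le> inner a y"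
    using separating_hyperplane_set_0 by blast
  then have a: "\<And>x. x \<in> C \<Longrightarrow> 0 \<le> inner a (x - r)" by blast
  obtain T where "T \<ge> 0" and J: "r - T *\<^sub>R a \<in> julia_set p"
    using julia_set_meets_ray[OF R bounded \<open>a \<noteq> 0\<close>] by blast
  have "0 \<le> inner a ((r - T *\<^sub>R a) - r)"
    using J by (intro a) (simp add: C_def hull_inc)
  then have "T * inner a a \<le> 0" by (simp add: inner_diff_right)
  moreover have "inner a a > 0" using \<open>a \<noteq> 0\<close> by simp
  ultimately have "T = 0" using \<open>T \<ge> 0\<close> by (simp add: mult_le_0_iff)
  with J \<open>r \<notin> convex hull (julia_set p)\<close> show False by (auto intro: hull_inc)
qed

lemma poly_fixed_point_exists:
  fixes p :: "complex poly"
  assumes "degree p \<ge> 2"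
  obtains x where "poly p x = x"
proof -
  have "degree (p - [:0, 1:]) = degree p"
    using assms by (simp add: degree_diff_eq_left)
  then have "\<not> constant (poly (p - [:0, 1:]))"
    using assms by (simp add: constant_degree)
  then obtain x where "poly (p - [:0, 1:]) x = 0"
    using fundamental_theorem_of_algebra by blast
  then show ?thesis using that by simp
qed

lemma orbit_of_fixed_point_preimage_bounded:
  assumes R: "escape_radius p R" and fixed: "poly p x = x" and preimage: "poly p y = x"
  shows "cmod ((poly p ^^ n) y) \<le> R"
proof (cases n)
  case 0
  have "cmod (poly p y) < R"
    using escape_radius_fixed_point[OF R fixed] by (simp add: preimage)
  then show ?thesis using escape_radius_preimage[OF R] 0 by fastforce
next
  case (Suc k)
  have "(poly p ^^ Suc k) y = x"
    by (induction k) (simp_all add: preimage fixed)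
  then show ?thesis using escape_radius_fixed_point[OF R fixed] Suc by simp
qed

theorem mainTheorem3:
  fixes p :: "complex poly" and z :: complex
  assumes "degree p \<ge> 2"
    and "poly (pderiv p) z = 0"
  shows "z \<in> convex hull (julia_set p)"
proof -
  obtain R where R: "escape_radius p R"
    using escape_radius_exists[OF assms(1)] .
  obtain x where fixed: "poly p x = x"
    using poly_fixed_point_exists[OF assms(1)] .
  have "degree (p - [:x:]) \<ge> 1"
    using assms(1) by (simp add: degree_diff_eq_left)
  moreover have "poly (pderiv (p - [:x:])) z = 0"
    using assms(2) by (simp add: pderiv_diff pderiv_pCons)
  ultimately have "z \<in> convex hull {y. poly (p - [:x:]) y = 0}"
    by (rule gauss_lucas)
  also have "\<dots> \<subseteq> convex hull (julia_set p)"
  proof (rule hull_minimal)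
    show "{y. poly (p - [:x:]) y = 0} \<subseteq> convex hull (julia_set p)"
      using bounded_orbit_in_convex_hull_julia_set[OF R]
        orbit_of_fixed_point_preimage_bounded[OF R fixed] by auto
  qed simp
  finally show ?thesis .
qed

end
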